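(* For every $l\ge 2$ there exist complex numbers $\alpha^{(l)}_{[i]}$, indexed by words $i$ in $\{0,1\}$ with $1\le w(i)\le l-1$ and last letter $1$, such that each $\alpha^{(l)}_{[i]}$ is a linear combination with integer coefficients of multiple zeta values of weight exactly $l-1-w(i)$ (for weight $0$ this means an integer), and for all $0<x<1$ \[ g_l(x)=\begin{cases} \dfrac{1}{x}\displaystyle\sum_{m=1}^{l-1}\sum_{i\in I_m}\alpha^{(l)}_{[i]}L_{[i]}(x) & l \text{ even},\\[2mm] \displaystyle\sum_{m=1}^{l-1}\sum_{i\in I_m}\alpha^{(l)}_{[i]}L_{[i]}(x) & l\text{ odd}.\end{cases} \]
   Context: Hyperlogarithms: for a word $w=[\sigma_1|\dots|\sigma_n]$ in letters $\sigma_j\in\mathbb{C}$ with $\sigma_n\neq 0$, $L_{[\,]}(z)=1$ and $L_{[\sigma_1|\sigma_2|\dots|\sigma_n]}(z)=\int_0^z \omega_{\sigma_1}(t)L_{[\sigma_2|\dots|\sigma_n]}(t)$ with $\omega_0=dt/t$, $\omega_\sigma=dt/(\sigma-t)$ for $\sigma\ne0$. $w(i)$ is the number of letters of $i$. $I_m$ is the set of words $i=[i_1|\dots|i_m]$ with $i_k\in\{0,1\}$ and $i_m=1$. Multiple zeta values: $\zeta(s_1,\dots,s_r)=\sum_{k_1>\dots>k_r\ge1}\prod_j k_j^{-s_j}$ ($s_j\ge1$ integers, $s_1\ge2$), of weight $s_1+\dots+s_r$. The functions $g_l$ on $(0,1)$ are defined by $g_2(x)=\int_0^1\frac{dt}{1-tx}=\frac{-\log(1-x)}{x}$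 and, for $l\ge2$, $g_{l+1}(x)=\int_0^1 \frac{t x\, g_l(t)}{1-tx}\,dt$ if $l$ is even and $g_{l+1}(x)=\int_0^1\frac{g_l(t)}{1-tx}\,dt$ if $l$ is odd (in the paper $g_l(x)=G_l(1,x)$). *)

theory Defs
  imports "HOL-Analysis.Analysis"
begin

fun hyperlog :: "real list \<Rightarrow> real \<Rightarrow> real" where
  "hyperlog [] z = 1"
| "hyperlog (\<sigma> # w) z =
     (if \<sigma> = 0 then integral {0..z} (\<lambda>t. hyperlog w t / t)
      else integral {0..z} (\<lambda>t. hyperlog w t / (\<sigma> - t)))"

definition Iw :: "nat \<Rightarrow> nat list set" where
  "Iw m = {i. length i = m \<and> set i \<subseteq> {0,1} \<and> m \<ge> 1 \<and> last i = 1}"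

definition mzv :: "nat list \<Rightarrow> real" where
  "mzv s = infsum (\<lambda>ks. \<Prod>j<length s. 1 / real (ks ! j) ^ (s ! j))
     {ks. length ks = length s \<and> sorted_wrt (>) ks \<and> (\<forall>k\<in>set ks. k \<ge> 1)}"

text \<open>Admissible indices (s_1 \<ge> 2, all s_j \<ge> 1); the empty index (zeta() = 1,
  weight 0) is included so that weight 0 combinations are exactly the integers.\<close>
definition admissible :: "nat list \<Rightarrow> bool" where
  "admissible s \<longleftrightarrow> s = [] \<or> (hd s \<ge> 2 \<and> (\<forall>x\<in>set s. x \<ge> 1))"

definition mzv_span :: "nat \<Rightarrow> complex set" where
  "mzv_span n = {a. \<exists>F c. finite F \<and> (\<forall>s\<in>F. admissible s \<and> sum_list s = n) \<and>
      a = (\<Sum>s\<in>F. of_int (c s) * complex_of_real (mzv s))}"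

text \<open>The functions g_l on (0,1); g_0, g_1 are unused.\<close>
fun g :: "nat \<Rightarrow> real \<Rightarrow> real" where
  "g 0 x = 0"
| "g (Suc 0) x = 0"
| "g (Suc (Suc 0)) x = - ln (1 - x) / x"
| "g (Suc (Suc (Suc n))) x =
     (if even (Suc (Suc n))
      then integral {0..1} (\<lambda>t. t * x * g (Suc (Suc n)) t / (1 - t * x))
      else integral {0..1} (\<lambda>t. g (Suc (Suc n)) t / (1 - t * x)))"

end

theory Submission
  imports Defs "HOL-Library.Multiset"
begin

(* For a word w in the letters 0 and 1 ending in 1, the hyperlogarithm L_w is a power series
   sum_n c_w(n) x^n whose coefficient c_w(n) is the part of a multiple zeta sum with largest
   summation index n. Expanding 1 / (1 - t x) geometrically, the integral producing g_(l+1)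
   from g_l becomes a generating function of the moments
   M_w(k) = int_0^1 t^k L_w(t) dt = sum_n c_w(n) / (n + k + 1).
   Partial fractions and telescoping express each M_w(k) as a combination of the c_u(k + 1),
   u at most one letter longer than w, with coefficients that are integral combinations of
   multiple zeta values of the complementary weight; summing back over k yields the L_u(x).
   Products of such coefficients remain integral combinations by the stuffle product, so the
   theorem follows by induction on l. *)

section \<open>Sums, series and integrals\<close>

lemma sum_mset_divide: "(\<Sum>u\<in>#M. f u / (c::real)) = (\<Sum>u\<in>#M. f u) / c"
  by (induction M) (auto simp: add_divide_distrib)

lemma sum_inverse_sqrt_le: "(\<Sum>n=1..N. 1 / sqrt (real n)) \<le> 2 * sqrt (real N)"
proof (induction N)
  case (Suc N)
  have "sqrt (real N) * sqrt (real N + 1) = sqrt (real N * (real N + 1))"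
    by (simp add: real_sqrt_mult)
  also have "\<dots> \<le> real N + 1 / 2"
    by (rule real_le_lsqrt) (auto simp: power2_eq_square algebra_simps)
  finally have "2 * sqrt (real N) + 1 / sqrt (real N + 1) \<le> 2 * sqrt (real N + 1)"
    by (simp add: field_simps)
  with Suc show ?case by (simp add: add.commute)
qed simp

lemma real_le_power:
  assumes "1 \<le> a"
  shows "real n \<le> real n ^ a"
proof (cases "n = 0")
  case False
  then have "real n ^ 1 \<le> real n ^ a"
    using assms by (intro power_increasing) auto
  then show ?thesis by simp
qed (use assms in simp)

lemma tendsto_sum_mset:
  fixes f :: "'a \<Rightarrow> 'b \<Rightarrow> 'c::topological_comm_monoid_add"
  assumes "\<And>u. u \<in># M \<Longrightarrow> (f u \<longlongrightarrow> l u) F"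
  shows "((\<lambda>x. \<Sum>u\<in>#M. f u x) \<longlongrightarrow> (\<Sum>u\<in>#M. l u)) F"
  using assms by (induction M) (auto intro!: tendsto_add)

lemma divide_partial_fraction:
  fixes a b c :: real
  assumes "a > 0" "b > 0"
  shows "c / (a * (a + b)) = (c / a - c / (a + b)) / b"
proof -
  have "c / a - c / (a + b) = c * b / (a * (a + b))"
    using assms by (simp add: divide_simps) (simp add: algebra_simps)
  then show ?thesis
    using assms by simp
qed

lemma sums_swap_nonneg:
  fixes c :: "nat \<Rightarrow> nat \<Rightarrow> real"
  assumes nonneg: "\<And>n k. c n k \<ge> 0" and rows: "\<And>n. (\<lambda>k. c n k) sums r n" and "r sums S"
  shows "(\<lambda>k. \<Sum>n. c n k) sums S"
proof -
  have rows': "((\<lambda>k. c n k) has_sum r n) UNIV" for n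
    using rows nonneg by (intro sums_nonneg_imp_has_sum) auto
  have "r n \<ge> 0" for n
    using rows[of n] nonneg by (metis sums_iff suminf_nonneg)
  then have total: "(r has_sum S) UNIV"
    using \<open>r sums S\<close> by (intro sums_nonneg_imp_has_sum) auto
  have "(\<lambda>(n, k). c n k) summable_on UNIV \<times> UNIV"
    by (rule summable_on_SigmaI[where g = r]) (use rows' total nonneg in \<open>auto simp: summable_on_def\<close>)
  then have "((\<lambda>(n, k). c n k) has_sum S) (UNIV \<times> UNIV)"
    by (intro has_sum_SigmaI[where g = r]) (use rows' total in auto)
  then have swapped: "((\<lambda>(k, n). c n k) has_sum S) (UNIV \<times> UNIV)"
    using has_sum_swap[where f = "\<lambda>(n, k). c n k" and A = UNIV and B = UNIV]
    by (simp add: case_prod_unfold)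
  have "(\<lambda>n. c n k) summable_on UNIV" for k
    using summable_on_SigmaD1[of "\<lambda>k n. c n k" UNIV "\<lambda>_. UNIV" k] swapped
    by (auto simp: summable_on_def)
  then have "((\<lambda>n. c n k) has_sum (\<Sum>n. c n k)) UNIV" for k
    using nonneg by (intro sums_nonneg_imp_has_sum summable_sums summable_on_imp_summable) auto
  then have "((\<lambda>k. \<Sum>n. c n k) has_sum S) UNIV"
    by (intro has_sum_Sigma'[OF swapped]) auto
  then show ?thesis
    by (rule has_sum_imp_sums)
qed

lemma sums_telescope_gap:
  fixes f :: "nat \<Rightarrow> real"
  assumes "f \<longlonglongrightarrow> 0"
  shows "(\<lambda>i. f i - f (i + N)) sums (\<Sum>i<N. f i)"
proof -
  have "(\<lambda>i. f (i + j) - f (Suc (i + j))) sums f j" for j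
    using telescope_sums'[OF LIMSEQ_ignore_initial_segment[OF assms, of j]] by simp
  then have "(\<lambda>i. \<Sum>j<N. f (i + j) - f (Suc (i + j))) sums (\<Sum>j<N. f j)"
    by (intro sums_sum)
  then show ?thesis
    using sum_lessThan_telescope'[of "\<lambda>j. f (i + j)" N for i] by simp
qed

lemma sums_inverse_mult_add:
  assumes "N \<ge> 1"
  shows "(\<lambda>n. if m < n then 1 / (real n * real (n + N)) else 0) sums
    ((\<Sum>i<N. 1 / real (m + Suc i)) / real N)"
proof -
  define f where "f i = 1 / real (i + Suc m)" for i
  have "f \<longlonglongrightarrow> 0"
    unfolding f_def using LIMSEQ_ignore_initial_segment[OF lim_1_over_n, of "Suc m"] by simp
  then have "(\<lambda>i. (f i - f (i + N)) / real N) sums ((\<Sum>i<N. f i) / real N)"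
    by (intro sums_divide sums_telescope_gap)
  moreover have "(f i - f (i + N)) / real N = 1 / (real (i + Suc m) * real (i + Suc m + N))" for i
    using divide_partial_fraction[of "real (i + Suc m)" "real N" 1] assms by (simp add: f_def add_ac)
  ultimately have "(\<lambda>i. (\<lambda>n. if m < n then 1 / (real n * real (n + N)) else 0) (i + Suc m)) sums
      ((\<Sum>i<N. 1 / real (m + Suc i)) / real N)"
    by (simp add: f_def add.commute)
  then show ?thesis
    by (subst (asm) sums_iff_shift) simp
qed

lemma has_integral_sums_nonneg:
  fixes f :: "nat \<Rightarrow> 'n::euclidean_space \<Rightarrow> real"
  assumes int: "\<And>k. (f k has_integral I k) S"
    and nonneg: "\<And>k x. x \<in> S \<Longrightarrow> 0 \<le> f k x"
    and sums: "\<And>x. x \<in> S \<Longrightarrow> (\<lambda>k. f k x) sums F x"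
    and "I sums J"
  shows "(F has_integral J) S"
proof -
  define P where "P K x = (\<Sum>k<K. f k x)" for K x
  have P_int: "(P K has_integral (\<Sum>k<K. I k)) S" for K
    unfolding P_def by (intro has_integral_sum int) auto
  then have integral_P: "integral S (P K) = (\<Sum>k<K. I k)" for K
    by (rule integral_unique)
  have "F integrable_on S \<and> (\<lambda>K. integral S (P K)) \<longlonglongrightarrow> integral S F"
  proof (rule monotone_convergence_increasing)
    show "P K integrable_on S" for K
      using P_int by blast
    show "P K x \<le> P (Suc K) x" if "x \<in> S" for K x
      using nonneg[OF that] by (simp add: P_def)
    show "(\<lambda>K. P K x) \<longlonglongrightarrow> F x" if "x \<in> S" for x
      using sums[OF that] by (simp add: P_def sums_def)
    show "bounded (range (\<lambda>K. integral S (P K)))"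
      using \<open>I sums J\<close> unfolding integral_P sums_def by (rule convergent_imp_bounded)
  qed
  moreover have "(\<lambda>K. integral S (P K)) \<longlonglongrightarrow> J"
    using \<open>I sums J\<close> by (simp add: integral_P sums_def)
  ultimately show ?thesis
    using LIMSEQ_unique has_integral_integrable_integral by metis
qed

lemma has_integral_power_01: "((\<lambda>t::real. t ^ m) has_integral 1 / real (Suc m)) {0<..<1}"
proof -
  have "((\<lambda>t::real. t ^ m) has_integral (1 ^ Suc m / real (Suc m) - 0 ^ Suc m / real (Suc m))) {0..1}"
  proof (rule fundamental_theorem_of_calculus)
    fix t :: real
    have "((\<lambda>t. t ^ Suc m / real (Suc m)) has_real_derivative t ^ m) (at t within {0..1})"
      by (rule derivative_eq_intros refl | simp)+
    then show "((\<lambda>t. t ^ Suc m / real (Suc m)) has_vector_derivative t ^ m) (at t within {0..1})"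
      by (simp add: has_real_derivative_iff_has_vector_derivative)
  qed simp
  then show ?thesis
    by (simp add: has_integral_Icc_iff_Ioo)
qed

section \<open>Truncated multiple zeta values\<close>

text \<open>\<open>mzv_top s n\<close> is the part of the sum for \<open>\<zeta>(s)\<close> with largest index \<open>k\<^sub>1 = n\<close>; for the
  empty index it is the single empty product, placed at \<open>n = 0\<close>.\<close>
fun mzv_top :: "nat list \<Rightarrow> nat \<Rightarrow> real" where
  "mzv_top [] n = (if n = 0 then 1 else 0)"
| "mzv_top (a # s) n = (\<Sum>k<n. mzv_top s k) / real n ^ a"

definition mzv_trunc :: "nat list \<Rightarrow> nat \<Rightarrow> real" where
  "mzv_trunc s N = (\<Sum>n<N. mzv_top s n)"

lemma mzv_top_nonneg: "mzv_top s n \<ge> 0"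
  by (induction s arbitrary: n) (auto intro!: divide_nonneg_nonneg sum_nonneg)

lemma mzv_trunc_nonneg: "mzv_trunc s N \<ge> 0"
  unfolding mzv_trunc_def by (auto intro!: sum_nonneg mzv_top_nonneg)

lemma mzv_trunc_Suc: "mzv_trunc s (Suc N) = mzv_trunc s N + mzv_top s N"
  by (simp add: mzv_trunc_def)

lemma mzv_trunc_0 [simp]: "mzv_trunc s 0 = 0"
  by (simp add: mzv_trunc_def)

lemma mzv_trunc_Nil: "mzv_trunc [] N = (if N = 0 then 0 else 1)"
  unfolding mzv_trunc_def by (induction N) auto

lemma mzv_top_Cons: "mzv_top (a # s) n = mzv_trunc s n / real n ^ a"
  by (simp add: mzv_trunc_def)

declare mzv_top.simps(2) [simp del]

fun stuffles :: "nat list \<Rightarrow> nat list \<Rightarrow> nat list multiset" where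
  "stuffles [] t = {#t#}"
| "stuffles s [] = {#s#}"
| "stuffles (a # s) (b # t) =
     image_mset (Cons a) (stuffles s (b # t)) + image_mset (Cons b) (stuffles (a # s) t) +
     image_mset (Cons (a + b)) (stuffles s t)"

lemma mzv_trunc_mult: "mzv_trunc s N * mzv_trunc t N = (\<Sum>u\<in>#stuffles s t. mzv_trunc u N)"
proof (induction s t arbitrary: N rule: stuffles.induct)
  case (1 t)
  then show ?case by (simp add: mzv_trunc_Nil)
next
  case (2 a s)
  then show ?case by (simp add: mzv_trunc_Nil)
next
  case (3 a s b t)
  have tops: "(\<Sum>u\<in>#stuffles (a # s) (b # t). mzv_top u n) =
      mzv_top (a # s) n * mzv_trunc (b # t) n + mzv_trunc (a # s) n * mzv_top (b # t) n +
      mzv_top (a # s) n * mzv_top (b # t) n" for n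
    by (simp add: image_mset.compositionality o_def mzv_top_Cons sum_mset_divide 3 power_add)
  show ?case
    by (induction N)
      (simp_all add: mzv_trunc_Suc sum_mset.distrib tops algebra_simps del: stuffles.simps)
qed

lemma stuffles_weight: "u \<in># stuffles s t \<Longrightarrow> sum_list u = sum_list s + sum_list t"
  by (induction s t arbitrary: u rule: stuffles.induct) auto

lemma stuffles_nonzero: "u \<in># stuffles s t \<Longrightarrow> 0 \<notin> set s \<Longrightarrow> 0 \<notin> set t \<Longrightarrow> 0 \<notin> set u"
  by (induction s t arbitrary: u rule: stuffles.induct) auto

lemma admissible_iff_nonzero: "admissible s \<longleftrightarrow> s = [] \<or> (hd s \<ge> 2 \<and> 0 \<notin> set s)"
  by (auto simp: admissible_def Suc_le_eq) (metis gr0I)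

lemma stuffles_admissible:
  assumes "u \<in># stuffles s t" "admissible s" "admissible t"
  shows "admissible u"
proof (cases s)
  case (Cons a s')
  show ?thesis
  proof (cases t)
    case (Cons b t')
    have "hd u \<in> {a, b, a + b}"
      using assms(1) \<open>s = a # s'\<close> \<open>t = b # t'\<close> by auto
    then show ?thesis
      using assms stuffles_nonzero[OF assms(1)] \<open>s = a # s'\<close> \<open>t = b # t'\<close>
      by (auto simp: admissible_iff_nonzero)
  qed (use assms \<open>s = a # s'\<close> in auto)
qed (use assms in auto)

lemma mzv_top_Cons_le:
  assumes "\<And>N. mzv_trunc s N \<le> K * sqrt (real N)" "a \<ge> 1" "n \<ge> 1"
  shows "mzv_top (a # s) n \<le> K / sqrt (real n)"
proof -
  have "0 \<le> K * sqrt (real n)"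
    using assms(1)[of n] mzv_trunc_nonneg[of s n] by linarith
  then have "mzv_top (a # s) n \<le> K * sqrt (real n) / real n"
    unfolding mzv_top_Cons using assms real_le_power[of a n] by (intro frac_le) auto
  also have "\<dots> = K / sqrt (real n)"
    using assms(3) by (simp add: field_simps)
  finally show ?thesis .
qed

text \<open>The truncated sums grow only logarithmically; the crude bound \<open>\<surd>N\<close> already makes
  \<open>mzv_top s n / n\<close> summable.\<close>
lemma mzv_trunc_le_sqrt: "0 \<notin> set s \<Longrightarrow> \<exists>K\<ge>0. \<forall>N. mzv_trunc s N \<le> K * sqrt (real N)"
proof (induction s)
  case Nil
  show ?case by (intro exI[of _ 1]) (simp add: mzv_trunc_Nil)
next
  case (Cons a s)
  then obtain K where K: "K \<ge> 0" "\<And>N. mzv_trunc s N \<le> K * sqrt (real N)" and "a \<ge> 1"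
    by auto
  have "mzv_trunc (a # s) N \<le> (2 * K) * sqrt (real N)" for N
  proof -
    have "mzv_trunc (a # s) N = (\<Sum>n\<in>{1..<N}. mzv_top (a # s) n)"
      unfolding mzv_trunc_def by (rule sum.mono_neutral_right) (auto simp: mzv_top_Cons Suc_le_eq)
    also have "\<dots> \<le> (\<Sum>n\<in>{1..N}. K * (1 / sqrt (real n)))"
      using mzv_top_Cons_le[OF K(2) \<open>a \<ge> 1\<close>] K(1)
      by (intro sum_le_included[where i = id]) auto
    also have "\<dots> \<le> K * (2 * sqrt (real N))"
      unfolding sum_distrib_left[symmetric] using sum_inverse_sqrt_le K(1) by (rule mult_left_mono)
    finally show ?thesis by simp
  qed
  then show ?case using K(1) by (intro exI[of _ "2 * K"]) auto
qed

lemma mzv_top_le_inverse_sqrt: "0 \<notin> set s \<Longrightarrow> \<exists>K\<ge>0. \<forall>n\<ge>1. mzv_top s n \<le> K / sqrt (real n)"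
proof (cases s)
  case (Cons a s')
  assume "0 \<notin> set s"
  then obtain K where "K \<ge> 0" "\<And>N. mzv_trunc s' N \<le> K * sqrt (real N)" and "a \<ge> 1"
    using mzv_trunc_le_sqrt[of s'] Cons by auto
  then show ?thesis using mzv_top_Cons_le Cons by blast
qed auto

lemma mzv_top_le_one: "0 \<notin> set s \<Longrightarrow> mzv_top s n \<le> 1"
proof (induction s arbitrary: n)
  case (Cons a s)
  then have "mzv_trunc s n \<le> real n" and "a \<ge> 1"
    unfolding mzv_trunc_def using sum_bounded_above[of "{..<n}" "mzv_top s" 1] by auto
  then have "mzv_trunc s n \<le> real n ^ a"
    using real_le_power[of a n] by linarith
  with \<open>a \<ge> 1\<close> show ?case
    unfolding mzv_top_Cons by (cases "n = 0") (simp_all add: divide_le_eq_1)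
qed simp

lemma summable_mzv_top_div:
  assumes "0 \<notin> set s" "\<And>n. n \<ge> 1 \<Longrightarrow> real n \<le> d n"
  shows "summable (\<lambda>n. mzv_top s n / d n)"
proof -
  obtain K where K: "K \<ge> 0" "\<And>n. n \<ge> 1 \<Longrightarrow> mzv_top s n \<le> K / sqrt (real n)"
    using mzv_top_le_inverse_sqrt[OF assms(1)] by blast
  show ?thesis
  proof (rule summable_comparison_test'[where N = 1])
    show "summable (\<lambda>n. K * real n powr (-3/2))"
      by (intro summable_mult) (simp add: summable_real_powr_iff)
    fix n :: nat
    assume n: "n \<ge> 1"
    have "d n > 0"
      using assms(2)[OF n] n by linarith
    then have "norm (mzv_top s n / d n) = mzv_top s n / d n"
      using mzv_top_nonneg[of s n] by simp
    also have "\<dots> \<le> mzv_top s n / real n"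
      using assms(2)[OF n] n mzv_top_nonneg[of s n] by (intro divide_left_mono) auto
    also have "\<dots> \<le> (K / sqrt (real n)) / real n"
      using K(2)[OF n] by (intro divide_right_mono) auto
    also have "\<dots> = K * real n powr (-3/2)"
      using n by (simp add: powr_minus_divide powr_add[of _ "1/2" 1, simplified] powr_half_sqrt)
    finally show "norm (mzv_top s n / d n) \<le> K * real n powr (-3/2)" .
  qed
qed

lemma summable_mzv_top:
  assumes "admissible s"
  shows "summable (mzv_top s)"
proof (cases s)
  case Nil
  show ?thesis
    by (rule summable_finite[of "{0}"]) (auto simp: Nil)
next
  case (Cons a s')
  have "a \<ge> 2" and "0 \<notin> set s'"
    using assms Cons by (auto simp: admissible_iff_nonzero)
  have "summable (\<lambda>n. mzv_top (1 # s') n / real n)"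
    using \<open>0 \<notin> set s'\<close> by (intro summable_mzv_top_div) auto
  then show ?thesis
  proof (rule summable_comparison_test'[where N = 1])
    fix n :: nat
    assume "n \<ge> 1"
    have "real n * real n \<le> real n ^ a"
      using \<open>n \<ge> 1\<close> \<open>a \<ge> 2\<close> power_increasing[of 2 a "real n"] by (simp add: power2_eq_square)
    then show "norm (mzv_top s n) \<le> mzv_top (1 # s') n / real n"
      using \<open>n \<ge> 1\<close> mzv_trunc_nonneg[of s' n] mzv_top_nonneg[of s n]
      by (auto simp: Cons mzv_top_Cons intro!: divide_left_mono)
  qed
qed

definition mzv_indices :: "nat list \<Rightarrow> nat list set" where
  "mzv_indices s = {ks. length ks = length s \<and> sorted_wrt (>) ks \<and> (\<forall>k\<in>set ks. k \<ge> 1)}"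

definition mzv_summand :: "nat list \<Rightarrow> nat list \<Rightarrow> real" where
  "mzv_summand s ks = (\<Prod>j<length s. 1 / real (ks ! j) ^ (s ! j))"

definition top_index :: "nat list \<Rightarrow> nat" where
  "top_index ks = (case ks of [] \<Rightarrow> 0 | k # _ \<Rightarrow> k)"

definition mzv_indices_top :: "nat list \<Rightarrow> nat \<Rightarrow> nat list set" where
  "mzv_indices_top s n = {ks \<in> mzv_indices s. top_index ks = n}"

lemma mzv_eq_infsum: "mzv s = infsum (mzv_summand s) (mzv_indices s)"
  by (simp add: mzv_def mzv_summand_def[abs_def] mzv_indices_def)

lemma mzv_indices_top_Nil: "mzv_indices_top [] n = (if n = 0 then {[]} else {})"
  by (auto simp: mzv_indices_top_def mzv_indices_def top_index_def)

lemma sorted_wrt_less_top_index: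
  "sorted_wrt (>) ks \<Longrightarrow> (\<forall>x\<in>set ks. x < k) \<longleftrightarrow> (ks = [] \<or> top_index ks < k)"
  by (cases ks) (auto simp: top_index_def)

lemma mzv_indices_top_Cons:
  "mzv_indices_top (a # s) n = (if n = 0 then {} else Cons n ` (\<Union>k<n. mzv_indices_top s k))"
proof (cases "n = 0")
  case True
  have "ks \<notin> mzv_indices_top (a # s) 0" for ks
    by (cases ks) (auto simp: mzv_indices_top_def mzv_indices_def top_index_def)
  then show ?thesis using True by auto
next
  case False
  have "ks \<in> mzv_indices_top (a # s) n \<longleftrightarrow> ks \<in> Cons n ` (\<Union>k<n. mzv_indices_top s k)" for ks
  proof
    assume "ks \<in> mzv_indices_top (a # s) n"
    then obtain ks' where ks: "ks = n # ks'" "ks' \<in> mzv_indices s" "\<forall>x\<in>set ks'. x < n"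
      using False by (cases ks) (auto simp: mzv_indices_top_def mzv_indices_def top_index_def)
    have "top_index ks' < n"
      using ks sorted_wrt_less_top_index[of ks' n] False by (auto simp: mzv_indices_def top_index_def)
    then show "ks \<in> Cons n ` (\<Union>k<n. mzv_indices_top s k)"
      using ks by (auto simp: mzv_indices_top_def)
  next
    assume "ks \<in> Cons n ` (\<Union>k<n. mzv_indices_top s k)"
    then obtain ks' where ks: "ks = n # ks'" "ks' \<in> mzv_indices s" "top_index ks' < n"
      by (auto simp: mzv_indices_top_def)
    then have "\<forall>x\<in>set ks'. x < n"
      using sorted_wrt_less_top_index[of ks' n] by (auto simp: mzv_indices_def)
    then show "ks \<in> mzv_indices_top (a # s) n"
      using ks False by (auto simp: mzv_indices_top_def mzv_indices_def top_index_def)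
  qed
  then show ?thesis using False by auto
qed

lemma finite_mzv_indices_top: "finite (mzv_indices_top s n)"
  by (induction s arbitrary: n) (auto simp: mzv_indices_top_Nil mzv_indices_top_Cons)

lemma mzv_top_eq_sum: "mzv_top s n = (\<Sum>ks\<in>mzv_indices_top s n. mzv_summand s ks)"
proof (induction s arbitrary: n)
  case Nil
  then show ?case by (simp add: mzv_indices_top_Nil mzv_summand_def)
next
  case (Cons a s)
  have summand_Cons: "mzv_summand (a # s) (n # ks) = 1 / real n ^ a * mzv_summand s ks" for ks
    unfolding mzv_summand_def by (simp add: prod.lessThan_Suc_shift del: prod.lessThan_Suc)
  have disj: "disjoint_family_on (mzv_indices_top s) {..<n}"
    by (auto simp: disjoint_family_on_def mzv_indices_top_def)
  show ?case
  proof (cases "n = 0")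
    case False
    have "(\<Sum>ks\<in>mzv_indices_top (a # s) n. mzv_summand (a # s) ks) =
        (\<Sum>k<n. \<Sum>ks\<in>mzv_indices_top s k. 1 / real n ^ a * mzv_summand s ks)"
      using False disj finite_mzv_indices_top
      by (simp add: mzv_indices_top_Cons sum.reindex sum.UNION_disjoint_family summand_Cons)
    also have "\<dots> = mzv_top (a # s) n"
      by (simp add: Cons.IH mzv_top_Cons mzv_trunc_def sum_divide_distrib)
    finally show ?thesis ..
  qed (simp add: mzv_indices_top_Cons mzv_top_Cons)
qed

lemma mzv_eq_suminf:
  assumes "summable (mzv_top s)"
  shows "mzv s = suminf (mzv_top s)"
proof -
  have summand_nonneg: "mzv_summand s ks \<ge> 0" for ks
    unfolding mzv_summand_def by (auto intro!: prod_nonneg)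
  have fibres: "(mzv_summand s has_sum mzv_top s n) (mzv_indices_top s n)" for n
    by (simp add: mzv_top_eq_sum finite_mzv_indices_top)
  have total: "(mzv_top s has_sum suminf (mzv_top s)) UNIV"
    using assms by (intro sums_nonneg_imp_has_sum) (auto simp: mzv_top_nonneg)
  have "(mzv_summand s \<circ> snd) summable_on Sigma UNIV (mzv_indices_top s)"
    by (rule summable_on_SigmaI[where g = "mzv_top s"])
      (use fibres total summand_nonneg in \<open>auto simp: summable_on_def\<close>)
  then have "((mzv_summand s \<circ> snd) has_sum suminf (mzv_top s)) (Sigma UNIV (mzv_indices_top s))"
    by (intro has_sum_SigmaI[OF _ total]) (use fibres in auto)
  moreover have "inj_on snd (Sigma UNIV (mzv_indices_top s))"
    by (auto simp: inj_on_def mzv_indices_top_def)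
  moreover have "snd ` Sigma UNIV (mzv_indices_top s) = mzv_indices s"
    by (force simp: mzv_indices_top_def)
  ultimately have "(mzv_summand s has_sum suminf (mzv_top s)) (mzv_indices s)"
    using has_sum_reindex[of snd "Sigma UNIV (mzv_indices_top s)" "mzv_summand s"] by simp
  then show ?thesis
    unfolding mzv_eq_infsum by (rule infsumI)
qed

lemma mzv_trunc_tendsto: "admissible s \<Longrightarrow> mzv_trunc s \<longlonglongrightarrow> mzv s"
  unfolding mzv_trunc_def[abs_def] using mzv_eq_suminf summable_LIMSEQ summable_mzv_top by metis

lemma mzv_Nil: "mzv [] = 1"
proof -
  have "mzv_top [] = (\<lambda>n. if n = 0 then 1 else 0)"
    by auto
  then have "mzv_top [] sums 1"
    using sums_single[of 0 "\<lambda>_. 1 :: real"] by simp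
  then show ?thesis
    using mzv_eq_suminf[of "[]"] by (simp add: sums_iff)
qed

lemma mzv_mult:
  assumes "admissible s" "admissible t"
  shows "mzv s * mzv t = (\<Sum>u\<in>#stuffles s t. mzv u)"
proof (rule LIMSEQ_unique)
  show "(\<lambda>N. mzv_trunc s N * mzv_trunc t N) \<longlonglongrightarrow> mzv s * mzv t"
    using assms by (intro tendsto_mult mzv_trunc_tendsto)
  show "(\<lambda>N. mzv_trunc s N * mzv_trunc t N) \<longlonglongrightarrow> (\<Sum>u\<in>#stuffles s t. mzv u)"
    unfolding mzv_trunc_mult
    by (intro tendsto_sum_mset mzv_trunc_tendsto stuffles_admissible[OF _ assms])
qed

section \<open>Integral combinations of multiple zeta values\<close>

definition admissible_of_weight :: "nat \<Rightarrow> nat list set" where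
  "admissible_of_weight n = {s. admissible s \<and> sum_list s = n}"

lemma finite_admissible_of_weight: "finite (admissible_of_weight n)"
proof (rule finite_subset)
  show "admissible_of_weight n \<subseteq> {s. set s \<subseteq> {..n} \<and> length s \<le> n}"
  proof
    fix s
    assume "s \<in> admissible_of_weight n"
    then have "0 \<notin> set s" "sum_list s = n"
      by (auto simp: admissible_of_weight_def admissible_iff_nonzero)
    moreover have "length s \<le> sum_list s"
      using \<open>0 \<notin> set s\<close> by (induction s) auto
    ultimately show "s \<in> {s. set s \<subseteq> {..n} \<and> length s \<le> n}"
      using member_le_sum_list[of _ s] by auto
  qed
  show "finite {s. set s \<subseteq> {..n} \<and> length s \<le> n}"
    by (rule finite_lists_length_le) simp
qed

text \<open>Indexing the coefficients by all admissible indices of the given weight, a finite set,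
  makes the closure properties below immediate.\<close>
definition mzv_zspan :: "nat \<Rightarrow> real set" where
  "mzv_zspan n = range (\<lambda>c. \<Sum>s\<in>admissible_of_weight n. of_int (c s) * mzv s)"

lemma mzv_zspan_zero: "0 \<in> mzv_zspan n"
  unfolding mzv_zspan_def by (rule range_eqI[of _ _ "\<lambda>_. 0"]) simp

lemma mzv_zspan_add:
  assumes "x \<in> mzv_zspan n" "y \<in> mzv_zspan n"
  shows "x + y \<in> mzv_zspan n"
proof -
  obtain c d where "x = (\<Sum>s\<in>admissible_of_weight n. of_int (c s) * mzv s)"
    "y = (\<Sum>s\<in>admissible_of_weight n. of_int (d s) * mzv s)"
    using assms unfolding mzv_zspan_def by blast
  then show ?thesis
    unfolding mzv_zspan_def
    by (intro range_eqI[of _ _ "\<lambda>s. c s + d s"]) (simp add: sum.distrib distrib_right)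
qed

lemma mzv_zspan_of_int_mult:
  assumes "x \<in> mzv_zspan n"
  shows "of_int k * x \<in> mzv_zspan n"
proof -
  obtain c where "x = (\<Sum>s\<in>admissible_of_weight n. of_int (c s) * mzv s)"
    using assms unfolding mzv_zspan_def by blast
  then show ?thesis
    unfolding mzv_zspan_def
    by (intro range_eqI[of _ _ "\<lambda>s. k * c s"]) (simp add: sum_distrib_left mult.assoc)
qed

lemma mzv_zspan_uminus: "x \<in> mzv_zspan n \<Longrightarrow> - x \<in> mzv_zspan n"
  using mzv_zspan_of_int_mult[of x n "-1"] by simp

lemma mzv_zspan_sum: "(\<And>i. i \<in> I \<Longrightarrow> f i \<in> mzv_zspan n) \<Longrightarrow> (\<Sum>i\<in>I. f i) \<in> mzv_zspan n"
  by (induction I rule: infinite_finite_induct) (auto intro: mzv_zspan_add mzv_zspan_zero)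

lemma mzv_zspan_sum_mset:
  "(\<And>u. u \<in># M \<Longrightarrow> f u \<in> mzv_zspan n) \<Longrightarrow> (\<Sum>u\<in>#M. f u) \<in> mzv_zspan n"
  by (induction M) (auto intro: mzv_zspan_add mzv_zspan_zero)

lemma mzv_in_mzv_zspan:
  assumes "admissible s"
  shows "mzv s \<in> mzv_zspan (sum_list s)"
proof -
  have "(\<Sum>u\<in>admissible_of_weight (sum_list s). of_int (if u = s then 1 else 0) * mzv u) =
      (\<Sum>u\<in>admissible_of_weight (sum_list s). if u = s then mzv u else 0)"
    by (intro sum.cong) auto
  also have "\<dots> = mzv s"
    using assms finite_admissible_of_weight by (simp add: admissible_of_weight_def)
  finally show ?thesis
    unfolding mzv_zspan_def by (intro range_eqI[of _ _ "\<lambda>u. if u = s then 1 else 0"]) simp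
qed

lemma one_in_mzv_zspan: "1 \<in> mzv_zspan 0"
  using mzv_in_mzv_zspan[of "[]"] by (simp add: mzv_Nil admissible_def)

lemma mzv_mult_in_mzv_zspan:
  assumes "admissible s" "admissible t"
  shows "mzv s * mzv t \<in> mzv_zspan (sum_list s + sum_list t)"
proof -
  have "mzv u \<in> mzv_zspan (sum_list s + sum_list t)" if "u \<in># stuffles s t" for u
    using mzv_in_mzv_zspan[OF stuffles_admissible[OF that assms]] stuffles_weight[OF that] by simp
  then show ?thesis
    unfolding mzv_mult[OF assms] by (rule mzv_zspan_sum_mset)
qed

lemma mzv_zspan_mult: "x \<in> mzv_zspan m \<Longrightarrow> y \<in> mzv_zspan n \<Longrightarrow> x * y \<in> mzv_zspan (m + n)"
proof -
  assume "x \<in> mzv_zspan m" "y \<in> mzv_zspan n"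
  then obtain c d where
    x: "x = (\<Sum>s\<in>admissible_of_weight m. of_int (c s) * mzv s)" and
    y: "y = (\<Sum>t\<in>admissible_of_weight n. of_int (d t) * mzv t)"
    unfolding mzv_zspan_def by blast
  have "x * y = (\<Sum>s\<in>admissible_of_weight m. \<Sum>t\<in>admissible_of_weight n.
      of_int (c s * d t) * (mzv s * mzv t))"
    unfolding x y sum_product by (simp add: mult_ac)
  also have "\<dots> \<in> mzv_zspan (m + n)"
    using mzv_mult_in_mzv_zspan
    by (intro mzv_zspan_sum mzv_zspan_of_int_mult) (auto simp: admissible_of_weight_def)
  finally show ?thesis .
qed

lemma of_real_in_mzv_span: "x \<in> mzv_zspan n \<Longrightarrow> complex_of_real x \<in> mzv_span n"
proof -
  assume "x \<in> mzv_zspan n"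
  then obtain c where "x = (\<Sum>s\<in>admissible_of_weight n. of_int (c s) * mzv s)"
    unfolding mzv_zspan_def by blast
  then have "complex_of_real x =
      (\<Sum>s\<in>admissible_of_weight n. of_int (c s) * complex_of_real (mzv s))"
    by simp
  then show ?thesis
    unfolding mzv_span_def using finite_admissible_of_weight
    by (intro CollectI exI[of _ "admissible_of_weight n"] exI[of _ c])
      (auto simp: admissible_of_weight_def)
qed

section \<open>Hyperlogarithms as power series\<close>

definition word01 :: "nat list \<Rightarrow> bool" where
  "word01 w \<longleftrightarrow> set w \<subseteq> {0, 1} \<and> (w \<noteq> [] \<longrightarrow> last w = 1)"

text \<open>The word \<open>0^(a\<^sub>1-1) 1 \<dots> 0^(a\<^sub>r-1) 1\<close> has index \<open>(a\<^sub>1, \<dots>, a\<^sub>r)\<close>; its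
  hyperlogarithm is the power series with coefficients \<^const>\<open>mzv_top\<close> of that index.\<close>
fun word_index :: "nat list \<Rightarrow> nat list" where
  "word_index [] = []"
| "word_index (c # w) =
     (if c = 0 then (case word_index w of [] \<Rightarrow> [] | a # s \<Rightarrow> Suc a # s) else 1 # word_index w)"

lemma word01_Nil [simp]: "word01 []"
  by (simp add: word01_def)

lemma word01_Cons: "word01 (c # w) \<longleftrightarrow> (c = 0 \<or> c = 1) \<and> word01 w \<and> (w = [] \<longrightarrow> c = 1)"
  by (cases w) (auto simp: word01_def)

lemma word_index_eq_Nil_iff: "word01 w \<Longrightarrow> word_index w = [] \<longleftrightarrow> w = []"
  by (induction w) (auto simp: word01_Cons split: list.splits)

lemma word_index_nonzero: "word01 w \<Longrightarrow> 0 \<notin> set (word_index w)"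
proof (induction w)
  case (Cons c w)
  then show ?case by (cases "word_index w") (auto simp: word01_Cons)
qed simp

lemma sum_list_word_index: "word01 w \<Longrightarrow> sum_list (word_index w) = length w"
proof (induction w)
  case (Cons c w)
  then show ?case
    using word_index_eq_Nil_iff[of w] by (auto simp: word01_Cons split: list.splits)
qed simp

lemma admissible_word_index_Cons0:
  assumes "word01 w" "w \<noteq> []"
  shows "admissible (word_index (0 # w))"
proof -
  obtain a s where "word_index w = a # s"
    using assms word_index_eq_Nil_iff by (cases "word_index w") auto
  then show ?thesis
    using word_index_nonzero[OF assms(1)] by (simp add: admissible_iff_nonzero)
qed

definition words_upto :: "nat \<Rightarrow> nat list set" where
  "words_upto k = {u. word01 u \<and> u \<noteq> [] \<and> length u \<le> k}"

lemma finite_words_upto: "finite (words_upto k)"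
proof (rule finite_subset)
  show "words_upto k \<subseteq> {u. set u \<subseteq> {0, 1} \<and> length u \<le> k}"
    by (auto simp: words_upto_def word01_def)
  show "finite {u :: nat list. set u \<subseteq> {0, 1} \<and> length u \<le> k}"
    by (rule finite_lists_length_le) simp
qed

lemma words_upto_Suc:
  "words_upto (Suc k) = insert [1] (Cons 0 ` words_upto k \<union> Cons 1 ` words_upto k)"
proof (intro set_eqI iffI)
  fix u
  assume "u \<in> words_upto (Suc k)"
  then obtain c v where "u = c # v" "word01 (c # v)" "length v \<le> k"
    unfolding words_upto_def by (cases u) auto
  then show "u \<in> insert [1] (Cons 0 ` words_upto k \<union> Cons 1 ` words_upto k)"
    by (cases "v = []") (auto simp: words_upto_def word01_Cons)
qed (auto simp: words_upto_def word01_Cons)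

lemma words_upto_1: "words_upto (Suc 0) = {[1]}"
  using words_upto_Suc[of 0] by (simp add: words_upto_def)

lemma sum_words_upto_Suc:
  "(\<Sum>u\<in>words_upto (Suc k). f u) =
    f [1] + (\<Sum>v\<in>words_upto k. f (0 # v)) + (\<Sum>v\<in>words_upto k. f (1 # v))"
proof -
  have "[1] \<notin> Cons 0 ` words_upto k \<union> Cons 1 ` words_upto k"
    by (auto simp: words_upto_def)
  then have "(\<Sum>u\<in>words_upto (Suc k). f u) =
      f [1] + (\<Sum>u\<in>Cons 0 ` words_upto k \<union> Cons 1 ` words_upto k. f u)"
    unfolding words_upto_Suc by (simp add: finite_words_upto)
  also have "\<dots> = f [1] + (\<Sum>u\<in>Cons 0 ` words_upto k. f u) + (\<Sum>u\<in>Cons 1 ` words_upto k. f u)"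
    by (subst sum.union_disjoint) (auto simp: finite_words_upto add.assoc)
  finally show ?thesis
    by (simp add: sum.reindex)
qed

lemma words_upto_eq_UN_Iw: "words_upto k = (\<Union>m\<in>{1..k}. Iw m)"
  unfolding words_upto_def Iw_def word01_def by (auto simp: Suc_le_eq)

lemma sum_Iw_eq_sum_words_upto: "(\<Sum>m=1..k. \<Sum>i\<in>Iw m. f i) = (\<Sum>i\<in>words_upto k. f i)"
proof -
  have "finite (Iw m)" if "m \<in> {1..k}" for m
    using that finite_words_upto[of k] words_upto_eq_UN_Iw[of k] by (metis UN_upper finite_subset)
  moreover have "Iw m \<inter> Iw m' = {}" if "m \<noteq> m'" for m m'
    using that by (auto simp: Iw_def)
  ultimately show ?thesis
    unfolding words_upto_eq_UN_Iw by (subst sum.UNION_disjoint) auto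
qed

definition hlog_coeff :: "nat list \<Rightarrow> nat \<Rightarrow> real" where
  "hlog_coeff w = mzv_top (word_index w)"

lemma hlog_coeff_Nil [simp]: "hlog_coeff [] n = (if n = 0 then 1 else 0)"
  by (simp add: hlog_coeff_def)

lemma hlog_coeff_nonneg: "hlog_coeff w n \<ge> 0"
  by (simp add: hlog_coeff_def mzv_top_nonneg)

lemma hlog_coeff_le_one: "word01 w \<Longrightarrow> hlog_coeff w n \<le> 1"
  by (simp add: hlog_coeff_def mzv_top_le_one word_index_nonzero)

lemma hlog_coeff_0:
  assumes "word01 w" "w \<noteq> []"
  shows "hlog_coeff w 0 = 0"
  using assms word_index_eq_Nil_iff[of w]
  by (cases "word_index w") (auto simp: hlog_coeff_def mzv_top_Cons)

lemma hlog_coeff_Cons0: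
  assumes "word01 w" "w \<noteq> []"
  shows "hlog_coeff (0 # w) n = hlog_coeff w n / real n"
  using assms word_index_eq_Nil_iff[of w]
  by (cases "word_index w") (auto simp: hlog_coeff_def mzv_top_Cons)

lemma hlog_coeff_Cons1: "hlog_coeff (1 # w) n = (\<Sum>k<n. hlog_coeff w k) / real n"
  by (simp add: hlog_coeff_def mzv_top_Cons mzv_trunc_def)

lemma hlog_coeff_one: "hlog_coeff [1] n = 1 / real n"
  unfolding hlog_coeff_Cons1 by (cases n) auto

lemma summable_hlog_coeff_div:
  "word01 w \<Longrightarrow> (\<And>n. n \<ge> 1 \<Longrightarrow> real n \<le> d n) \<Longrightarrow> summable (\<lambda>n. hlog_coeff w n / d n)"
  unfolding hlog_coeff_def by (rule summable_mzv_top_div[OF word_index_nonzero])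

definition hlog_series :: "nat list \<Rightarrow> real \<Rightarrow> real" where
  "hlog_series w x = (\<Sum>n. hlog_coeff w n * x ^ n)"

lemma summable_hlog_series:
  assumes "word01 w" "\<bar>x\<bar> < 1"
  shows "summable (\<lambda>n. hlog_coeff w n * x ^ n)"
proof (rule summable_comparison_test'[where N = 0])
  show "summable (\<lambda>n. \<bar>x\<bar> ^ n)"
    using assms(2) by simp
  show "norm (hlog_coeff w n * x ^ n) \<le> \<bar>x\<bar> ^ n" for n
    using hlog_coeff_le_one[OF assms(1), of n] hlog_coeff_nonneg[of w n]
    by (simp add: abs_mult power_abs mult_left_le_one_le)
qed

lemma hlog_series_nonneg: "word01 w \<Longrightarrow> 0 \<le> x \<Longrightarrow> x < 1 \<Longrightarrow> hlog_series w x \<ge> 0"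
  unfolding hlog_series_def
  by (intro suminf_nonneg summable_hlog_series) (auto simp: hlog_coeff_nonneg)

lemma hlog_series_Nil: "hlog_series [] x = 1"
proof -
  have "(\<lambda>n. hlog_coeff [] n * x ^ n) = (\<lambda>n. if n = 0 then 1 else 0)"
    by auto
  then show ?thesis
    using sums_single[of 0 "\<lambda>_. 1 :: real"] by (simp add: hlog_series_def sums_iff)
qed

lemma hlog_series_0: "word01 w \<Longrightarrow> w \<noteq> [] \<Longrightarrow> hlog_series w 0 = 0"
  unfolding hlog_series_def powser_zero by (rule hlog_coeff_0)

lemma hlog_series_has_derivative:
  "word01 w \<Longrightarrow> \<bar>x\<bar> < 1 \<Longrightarrow>
    (hlog_series w has_field_derivative (\<Sum>n. diffs (hlog_coeff w) n * x ^ n)) (at x)"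
  unfolding hlog_series_def[abs_def]
  by (rule termdiffs_strong'[where K = 1]) (auto intro: summable_hlog_series)

lemma hlog_series_Cons0_has_derivative:
  assumes "word01 w" "w \<noteq> []" "\<bar>x\<bar> < 1" "x \<noteq> 0"
  shows "(hlog_series (0 # w) has_field_derivative hlog_series w x / x) (at x)"
proof -
  have "(\<lambda>n. hlog_coeff w (Suc n) * x ^ Suc n) sums (hlog_series w x - hlog_coeff w 0)"
    using summable_hlog_series[OF assms(1,3)] unfolding hlog_series_def
    by (subst sums_Suc_iff) (simp add: summable_sums)
  then have "(\<lambda>n. hlog_coeff w (Suc n) * x ^ Suc n / x) sums (hlog_series w x / x)"
    using hlog_coeff_0[OF assms(1,2)] by (intro sums_divide) simp
  moreover have "(\<lambda>n. hlog_coeff w (Suc n) * x ^ Suc n / x) =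
      (\<lambda>n. diffs (hlog_coeff (0 # w)) n * x ^ n)"
    unfolding diffs_def hlog_coeff_Cons0[OF assms(1,2)] using assms(4) by auto
  ultimately have "(\<Sum>n. diffs (hlog_coeff (0 # w)) n * x ^ n) = hlog_series w x / x"
    by (simp add: sums_iff)
  moreover have "word01 (0 # w)"
    using assms by (simp add: word01_Cons)
  ultimately show ?thesis
    using hlog_series_has_derivative[OF _ assms(3)] by metis
qed

lemma hlog_series_Cons1_has_derivative:
  assumes "word01 w" "\<bar>x\<bar> < 1"
  shows "(hlog_series (1 # w) has_field_derivative hlog_series w x / (1 - x)) (at x)"
proof -
  have "summable (\<lambda>n. norm (hlog_coeff w n * x ^ n))"
    using summable_hlog_series[OF assms(1), of "\<bar>x\<bar>"] assms(2)
    by (simp add: abs_mult power_abs hlog_coeff_nonneg)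
  moreover have "summable (\<lambda>k. norm (x ^ k))"
    using assms(2) by (simp add: power_abs)
  ultimately have "hlog_series w x * (\<Sum>k. x ^ k) =
      (\<Sum>k. \<Sum>i\<le>k. hlog_coeff w i * x ^ i * x ^ (k - i))"
    unfolding hlog_series_def by (rule Cauchy_product)
  also have "\<dots> = (\<Sum>k. diffs (hlog_coeff (1 # w)) k * x ^ k)"
    unfolding diffs_def hlog_coeff_Cons1
    by (simp add: lessThan_Suc_atMost sum_distrib_right mult.assoc power_add[symmetric])
  finally have "(\<Sum>k. diffs (hlog_coeff (1 # w)) k * x ^ k) = hlog_series w x / (1 - x)"
    using assms(2) by (simp add: suminf_geometric divide_inverse)
  moreover have "word01 (1 # w)"
    using assms by (simp add: word01_Cons)
  ultimately show ?thesis
    using hlog_series_has_derivative[OF _ assms(2)] by metis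
qed

lemma hlog_series_Cons_has_derivative:
  assumes "word01 (c # w)" "0 < t" "t < 1"
  shows "(hlog_series (c # w) has_real_derivative
    (if c = 0 then hlog_series w t / t else hlog_series w t / (1 - t))) (at t)"
  using assms hlog_series_Cons0_has_derivative[of w t] hlog_series_Cons1_has_derivative[of w t]
  by (auto simp: word01_Cons)

lemma hyperlog_eq_hlog_series:
  "word01 w \<Longrightarrow> 0 \<le> z \<Longrightarrow> z < 1 \<Longrightarrow> hyperlog (map real w) z = hlog_series w z"
proof (induction w arbitrary: z)
  case Nil
  then show ?case by (simp add: hlog_series_Nil)
next
  case (Cons c w)
  have "word01 w" and c: "c = 0 \<or> c = 1"
    using Cons.prems(1) by (auto simp: word01_Cons)
  let ?L = "\<lambda>t. hyperlog (map real w) t"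
  have "isCont (hlog_series (c # w)) t" if "t \<in> {0..z}" for t
    using that Cons.prems by (intro DERIV_isCont[OF hlog_series_has_derivative[OF Cons.prems(1)]]) auto
  then have "continuous_on {0..z} (hlog_series (c # w))"
    by (simp add: continuous_at_imp_continuous_on)
  then have "((\<lambda>t. if c = 0 then ?L t / t else ?L t / (1 - t)) has_integral
      hlog_series (c # w) z - hlog_series (c # w) 0) {0..z}"
  proof (rule fundamental_theorem_of_calculus_interior[OF \<open>0 \<le> z\<close>])
    fix t
    assume t: "t \<in> {0<..<z}"
    then have "?L t = hlog_series w t"
      using Cons.IH[OF \<open>word01 w\<close>, of t] Cons.prems by simp
    moreover have "(hlog_series (c # w) has_real_derivative
        (if c = 0 then hlog_series w t / t else hlog_series w t / (1 - t))) (at t)"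
      using t Cons.prems by (intro hlog_series_Cons_has_derivative) auto
    ultimately show "(hlog_series (c # w) has_vector_derivative
        (if c = 0 then ?L t / t else ?L t / (1 - t))) (at t)"
      by (simp only: has_real_derivative_iff_has_vector_derivative)
  qed
  moreover have "hlog_series (c # w) 0 = 0"
    using Cons.prems(1) by (rule hlog_series_0) simp
  ultimately show ?case
    using c by (auto simp: integral_unique)
qed

section \<open>Moments of hyperlogarithms\<close>

definition hlog_moment :: "nat list \<Rightarrow> nat \<Rightarrow> real" where
  "hlog_moment w k = (\<Sum>n. hlog_coeff w n / real (n + k + 1))"

lemma summable_hlog_moment: "word01 w \<Longrightarrow> summable (\<lambda>n. hlog_coeff w n / real (n + k + 1))"
  by (rule summable_hlog_coeff_div) auto

lemma hlog_moment_nonneg: "word01 w \<Longrightarrow> hlog_moment w k \<ge> 0"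
  unfolding hlog_moment_def by (intro suminf_nonneg summable_hlog_moment) (auto simp: hlog_coeff_nonneg)

lemma hlog_moment_le: "word01 w \<Longrightarrow> hlog_moment w k \<le> hlog_moment w 0"
  unfolding hlog_moment_def
  by (intro suminf_le summable_hlog_moment divide_left_mono) (auto simp: hlog_coeff_nonneg)

lemma hlog_moment_integral:
  assumes "word01 w"
  shows "((\<lambda>t. t ^ k * hlog_series w t) has_integral hlog_moment w k) {0<..<1}"
  unfolding hlog_moment_def
proof (rule has_integral_sums_nonneg)
  show "((\<lambda>t. hlog_coeff w n * t ^ (n + k)) has_integral
      hlog_coeff w n / real (n + k + 1)) {0<..<1}" for n
    using has_integral_mult_right[OF has_integral_power_01[of "n + k"]] by simp
  show "0 \<le> hlog_coeff w n * t ^ (n + k)" if "t \<in> {0<..<1}" for n t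
    using that by (simp add: hlog_coeff_nonneg)
  show "(\<lambda>n. hlog_coeff w n * t ^ (n + k)) sums (t ^ k * hlog_series w t)" if "t \<in> {0<..<1}" for t
    using sums_mult[OF summable_sums[OF summable_hlog_series[OF assms, of t]], of "t ^ k"] that
    by (simp add: hlog_series_def power_add mult_ac)
  show "(\<lambda>n. hlog_coeff w n / real (n + k + 1)) sums (\<Sum>n. hlog_coeff w n / real (n + k + 1))"
    using summable_hlog_moment[OF assms] by (rule summable_sums)
qed

lemma hlog_series_kernel_integral:
  assumes "word01 w" "0 < x" "x < 1"
  shows "((\<lambda>t. x * hlog_series w t / (1 - t * x)) has_integral
      (\<Sum>k. x ^ Suc k * hlog_moment w k)) {0<..<1}"
proof (rule has_integral_sums_nonneg)
  show "((\<lambda>t. x ^ Suc k * (t ^ k * hlog_series w t)) has_integral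
      x ^ Suc k * hlog_moment w k) {0<..<1}" for k
    using hlog_moment_integral[OF assms(1)] by (rule has_integral_mult_right)
  show "0 \<le> x ^ Suc k * (t ^ k * hlog_series w t)" if "t \<in> {0<..<1}" for k t
    using that assms by (simp add: hlog_series_nonneg)
  show "(\<lambda>k. x ^ Suc k * (t ^ k * hlog_series w t)) sums (x * hlog_series w t / (1 - t * x))"
    if "t \<in> {0<..<1}" for t
  proof -
    have "norm (t * x) < 1"
      using that assms mult_strict_mono[of t 1 x 1] by (simp add: abs_mult)
    then have "(\<lambda>k. x * hlog_series w t * (t * x) ^ k) sums (x * hlog_series w t * (1 / (1 - t * x)))"
      by (intro sums_mult geometric_sums)
    then show ?thesis
      by (simp add: power_mult_distrib mult_ac)
  qed
  have "summable (\<lambda>k. x ^ Suc k * hlog_moment w k)"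
  proof (rule summable_comparison_test'[where N = 0])
    show "summable (\<lambda>k. hlog_moment w 0 * x ^ Suc k)"
      using assms by (intro summable_mult) simp
    show "norm (x ^ Suc k * hlog_moment w k) \<le> hlog_moment w 0 * x ^ Suc k" for k
      using assms hlog_moment_le[OF assms(1), of k] hlog_moment_nonneg[OF assms(1), of k]
      by (simp add: mult_left_mono mult.commute)
  qed
  then show "(\<lambda>k. x ^ Suc k * hlog_moment w k) sums (\<Sum>k. x ^ Suc k * hlog_moment w k)"
    by (rule summable_sums)
qed

lemma hlog_moment_Nil: "hlog_moment [] k = 1 / real (Suc k)"
proof -
  have "(\<lambda>n. hlog_coeff [] n / real (n + k + 1)) = (\<lambda>n. if n = 0 then 1 / real (Suc k) else 0)"
    by auto
  then show ?thesis
    using sums_single[of 0 "\<lambda>_. 1 / real (Suc k)"] by (simp add: hlog_moment_def sums_iff)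
qed

lemma hlog_moment_Cons0:
  assumes "word01 w" "w \<noteq> []"
  shows "hlog_moment (0 # w) k = (mzv (word_index (0 # w)) - hlog_moment w k) / real (Suc k)"
proof -
  have partial_fractions: "hlog_coeff (0 # w) n / real (n + k + 1) =
      (hlog_coeff (0 # w) n - hlog_coeff w n / real (n + k + 1)) / real (Suc k)" for n
  proof (cases "n = 0")
    case False
    then show ?thesis
      using divide_partial_fraction[of "real n" "real (Suc k)" "hlog_coeff w n"]
      by (simp add: hlog_coeff_Cons0[OF assms] add_ac)
  qed (simp add: hlog_coeff_0[OF assms] hlog_coeff_Cons0[OF assms])
  have "summable (mzv_top (word_index (0 # w)))"
    by (intro summable_mzv_top admissible_word_index_Cons0 assms)
  then have "hlog_coeff (0 # w) sums mzv (word_index (0 # w))"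
    unfolding hlog_coeff_def[abs_def] using mzv_eq_suminf summable_sums by metis
  then have "(\<lambda>n. (hlog_coeff (0 # w) n - hlog_coeff w n / real (n + k + 1)) / real (Suc k)) sums
      ((mzv (word_index (0 # w)) - hlog_moment w k) / real (Suc k))"
    unfolding hlog_moment_def
    by (intro sums_divide sums_diff summable_sums summable_hlog_moment assms(1))
  then show ?thesis
    unfolding hlog_moment_def partial_fractions by (simp add: sums_iff)
qed

lemma hlog_moment_Cons1:
  assumes "word01 w"
  shows "hlog_moment (1 # w) k = (\<Sum>i\<le>k. hlog_moment w i) / real (Suc k)"
proof -
  \<comment> \<open>Exchange the summations over \<open>m < n\<close>; the inner sum over \<open>n > m\<close> telescopes.\<close>
  define c where "c n m = (if m < n then hlog_coeff w m / (real n * real (n + Suc k)) else 0)" for n m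
  have "(\<lambda>m. c n m) sums (hlog_coeff (1 # w) n / real (n + k + 1))" for n
  proof -
    have "(\<lambda>m. c n m) sums (\<Sum>m<n. c n m)"
      by (rule sums_finite) (auto simp: c_def)
    then show ?thesis
      unfolding hlog_coeff_Cons1 by (simp add: c_def sum_divide_distrib)
  qed
  moreover have "(\<lambda>n. hlog_coeff (1 # w) n / real (n + k + 1)) sums hlog_moment (1 # w) k"
    unfolding hlog_moment_def using assms
    by (intro summable_sums summable_hlog_moment) (simp add: word01_Cons)
  ultimately have "(\<lambda>m. \<Sum>n. c n m) sums hlog_moment (1 # w) k"
    by (intro sums_swap_nonneg) (auto simp: c_def hlog_coeff_nonneg)
  moreover have "(\<Sum>n. c n m) = (\<Sum>i\<le>k. hlog_coeff w m / real (m + i + 1)) / real (Suc k)" for m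
  proof -
    have "(\<lambda>n. hlog_coeff w m * (if m < n then 1 / (real n * real (n + Suc k)) else 0)) sums
        (hlog_coeff w m * ((\<Sum>i<Suc k. 1 / real (m + Suc i)) / real (Suc k)))"
      by (intro sums_mult sums_inverse_mult_add) simp
    then show ?thesis
      by (simp add: c_def sums_iff sum_distrib_left lessThan_Suc_atMost if_distrib cong: if_cong)
  qed
  moreover have "(\<lambda>m. (\<Sum>i\<le>k. hlog_coeff w m / real (m + i + 1)) / real (Suc k)) sums
      ((\<Sum>i\<le>k. hlog_moment w i) / real (Suc k))"
    unfolding hlog_moment_def using assms
    by (intro sums_divide sums_sum summable_sums summable_hlog_moment)
  ultimately show ?thesis
    by (simp add: sums_iff)
qed

lemma hlog_coeff_Cons0_add_Cons1:
  assumes "word01 v" "v \<noteq> []"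
  shows "hlog_coeff (0 # v) (Suc k) + hlog_coeff (1 # v) (Suc k) =
    (\<Sum>i\<le>k. hlog_coeff v (Suc i)) / real (Suc k)"
proof -
  have "(\<Sum>i<Suc (Suc k). hlog_coeff v i) = hlog_coeff v 0 + (\<Sum>i<Suc k. hlog_coeff v (Suc i))"
    by (rule sum.lessThan_Suc_shift)
  then have "(\<Sum>i<Suc (Suc k). hlog_coeff v i) = (\<Sum>i\<le>k. hlog_coeff v (Suc i))"
    using hlog_coeff_0[OF assms] by (simp add: lessThan_Suc_atMost)
  then show ?thesis
    unfolding hlog_coeff_Cons0[OF assms] hlog_coeff_Cons1
    by (simp add: add_divide_distrib[symmetric] add.commute)
qed

text \<open>The recursion mirrors \<open>hlog_moment_Cons0\<close> for the letter 0, and \<open>hlog_moment_Cons1\<close>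
  together with \<open>hlog_coeff_Cons0_add_Cons1\<close> for the letter 1.\<close>
fun hlog_moment_coeff :: "nat list \<Rightarrow> nat list \<Rightarrow> real" where
  "hlog_moment_coeff [] u = (if u = [1] then 1 else 0)"
| "hlog_moment_coeff (c # w) [] = 0"
| "hlog_moment_coeff (c # w) (d # v) =
     (if c = 0 then
        (if d = 0 then - hlog_moment_coeff w v else if v = [] then mzv (word_index (0 # w)) else 0)
      else hlog_moment_coeff w v)"

lemma hlog_moment_coeff_Nil_right [simp]: "hlog_moment_coeff w [] = 0"
  by (cases w) auto

lemma hlog_moment_coeff_eq_0: "Suc (length w) < length u \<Longrightarrow> hlog_moment_coeff w u = 0"
proof (induction w arbitrary: u)
  case (Cons c w)
  then show ?case by (cases u) auto
qed auto

lemma hlog_moment_coeff_in_mzv_zspan: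
  "word01 w \<Longrightarrow> length u \<le> Suc (length w) \<Longrightarrow>
    hlog_moment_coeff w u \<in> mzv_zspan (Suc (length w) - length u)"
proof (induction w arbitrary: u)
  case Nil
  then show ?case by (auto simp: one_in_mzv_zspan mzv_zspan_zero)
next
  case (Cons c w)
  show ?case
  proof (cases u)
    case (Cons d v)
    have "word01 w"
      using Cons.prems(1) by (simp add: word01_Cons)
    moreover have "mzv (word_index (0 # w)) \<in> mzv_zspan (Suc (length w))" if "c = 0"
    proof -
      have "w \<noteq> []" "word01 (0 # w)"
        using Cons.prems(1) that by (auto simp: word01_Cons)
      then show ?thesis
        using mzv_in_mzv_zspan[OF admissible_word_index_Cons0[OF \<open>word01 w\<close>]]
          sum_list_word_index[of "0 # w"] by (metis length_Cons)
    qed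
    ultimately show ?thesis
      using Cons.IH[of v] Cons.prems(2) \<open>u = d # v\<close>
      by (auto intro: mzv_zspan_uminus mzv_zspan_zero)
  qed (simp add: mzv_zspan_zero)
qed

lemma hlog_moment_expansion_Cons0:
  assumes "word01 w" "w \<noteq> []"
    and expansion: "\<And>k. hlog_moment w k =
      (\<Sum>u\<in>words_upto (Suc (length w)). hlog_moment_coeff w u * hlog_coeff u (Suc k))"
  shows "hlog_moment (0 # w) k =
    (\<Sum>u\<in>words_upto (Suc (length (0 # w))). hlog_moment_coeff (0 # w) u * hlog_coeff u (Suc k))"
proof -
  let ?W = "words_upto (Suc (length w))"
  have words: "word01 v" "v \<noteq> []" if "v \<in> ?W" for v
    using that by (auto simp: words_upto_def)
  have "(\<Sum>v\<in>?W. hlog_moment_coeff (0 # w) (0 # v) * hlog_coeff (0 # v) (Suc k)) =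
      - (\<Sum>v\<in>?W. hlog_moment_coeff w v * hlog_coeff v (Suc k)) / real (Suc k)"
    unfolding sum_negf[symmetric] sum_divide_distrib using words
    by (intro sum.cong) (auto simp: hlog_coeff_Cons0)
  moreover have "(\<Sum>v\<in>?W. hlog_moment_coeff (0 # w) (1 # v) * hlog_coeff (1 # v) (Suc k)) = 0"
    using words by (intro sum.neutral) auto
  moreover have "hlog_moment_coeff (0 # w) [1] * hlog_coeff [1] (Suc k) =
      mzv (word_index (0 # w)) / real (Suc k)"
    by (simp add: hlog_coeff_one[unfolded One_nat_def] del: word_index.simps)
  moreover have "(\<Sum>u\<in>words_upto (Suc (length (0 # w))).
      hlog_moment_coeff (0 # w) u * hlog_coeff u (Suc k)) =
      hlog_moment_coeff (0 # w) [1] * hlog_coeff [1] (Suc k) +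
      (\<Sum>v\<in>?W. hlog_moment_coeff (0 # w) (0 # v) * hlog_coeff (0 # v) (Suc k)) +
      (\<Sum>v\<in>?W. hlog_moment_coeff (0 # w) (1 # v) * hlog_coeff (1 # v) (Suc k))"
    by (simp only: length_Cons sum_words_upto_Suc)
  ultimately show ?thesis
    unfolding hlog_moment_Cons0[OF assms(1,2)] expansion by (simp add: diff_divide_distrib)
qed

lemma hlog_moment_expansion_Cons1:
  assumes "word01 w"
    and expansion: "\<And>k. hlog_moment w k =
      (\<Sum>u\<in>words_upto (Suc (length w)). hlog_moment_coeff w u * hlog_coeff u (Suc k))"
  shows "hlog_moment (1 # w) k =
    (\<Sum>u\<in>words_upto (Suc (length (1 # w))). hlog_moment_coeff (1 # w) u * hlog_coeff u (Suc k))"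
proof -
  let ?W = "words_upto (Suc (length w))"
  have "(\<Sum>v\<in>?W. hlog_moment_coeff (1 # w) (0 # v) * hlog_coeff (0 # v) (Suc k)) +
      (\<Sum>v\<in>?W. hlog_moment_coeff (1 # w) (1 # v) * hlog_coeff (1 # v) (Suc k)) =
      (\<Sum>v\<in>?W. hlog_moment_coeff w v * ((\<Sum>i\<le>k. hlog_coeff v (Suc i)) / real (Suc k)))"
    unfolding sum.distrib[symmetric]
    by (intro sum.cong refl)
      (auto simp: words_upto_def distrib_left[symmetric] hlog_coeff_Cons0_add_Cons1[unfolded One_nat_def])
  also have "\<dots> = hlog_moment (1 # w) k"
    unfolding hlog_moment_Cons1[OF assms(1)] expansion
    by (simp add: sum_divide_distrib sum_distrib_left sum.swap[of _ ?W])
  finally have "(\<Sum>v\<in>?W. hlog_moment_coeff (1 # w) (0 # v) * hlog_coeff (0 # v) (Suc k)) +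
      (\<Sum>v\<in>?W. hlog_moment_coeff (1 # w) (1 # v) * hlog_coeff (1 # v) (Suc k)) = hlog_moment (1 # w) k" .
  moreover have "(\<Sum>u\<in>words_upto (Suc (length (1 # w))).
      hlog_moment_coeff (1 # w) u * hlog_coeff u (Suc k)) =
      hlog_moment_coeff (1 # w) [1] * hlog_coeff [1] (Suc k) +
      (\<Sum>v\<in>?W. hlog_moment_coeff (1 # w) (0 # v) * hlog_coeff (0 # v) (Suc k)) +
      (\<Sum>v\<in>?W. hlog_moment_coeff (1 # w) (1 # v) * hlog_coeff (1 # v) (Suc k))"
    by (simp only: length_Cons sum_words_upto_Suc)
  ultimately show ?thesis
    by (simp add: add.assoc)
qed

lemma hlog_moment_expansion:
  "word01 w \<Longrightarrow> hlog_moment w k =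
    (\<Sum>u\<in>words_upto (Suc (length w)). hlog_moment_coeff w u * hlog_coeff u (Suc k))"
proof (induction w arbitrary: k)
  case Nil
  show ?case
    by (simp add: hlog_moment_Nil words_upto_1 hlog_coeff_one[unfolded One_nat_def])
next
  case (Cons c w)
  then consider "c = 0" "w \<noteq> []" "word01 w" | "c = 1" "word01 w"
    by (auto simp: word01_Cons)
  then show ?case
    using Cons.IH hlog_moment_expansion_Cons0 hlog_moment_expansion_Cons1 by cases blast+
qed

lemma hlog_series_kernel_integral_expansion:
  assumes "word01 w" "Suc (length w) \<le> K" "0 < x" "x < 1"
  shows "((\<lambda>t. x * hlog_series w t / (1 - t * x)) has_integral
      (\<Sum>u\<in>words_upto K. hlog_moment_coeff w u * hlog_series u x)) {0<..<1}"
proof -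
  have "words_upto (Suc (length w)) \<subseteq> words_upto K"
    using assms(2) by (auto simp: words_upto_def)
  then have moment:
    "hlog_moment w k = (\<Sum>u\<in>words_upto K. hlog_moment_coeff w u * hlog_coeff u (Suc k))" for k
    unfolding hlog_moment_expansion[OF assms(1)]
    by (intro sum.mono_neutral_left finite_words_upto) (auto simp: words_upto_def hlog_moment_coeff_eq_0)
  have "(\<lambda>k. hlog_coeff u (Suc k) * x ^ Suc k) sums hlog_series u x" if "u \<in> words_upto K" for u
  proof -
    have "word01 u" "u \<noteq> []"
      using that by (auto simp: words_upto_def)
    then show ?thesis
      using summable_hlog_series[of u x] assms(3,4) hlog_coeff_0[of u] unfolding hlog_series_def
      by (subst sums_Suc_iff) (simp add: summable_sums)
  qed
  then have "(\<lambda>k. \<Sum>u\<in>words_upto K. hlog_moment_coeff w u * (hlog_coeff u (Suc k) * x ^ Suc k)) sums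
      (\<Sum>u\<in>words_upto K. hlog_moment_coeff w u * hlog_series u x)"
    by (intro sums_sum sums_mult)
  then have "(\<lambda>k. x ^ Suc k * hlog_moment w k) sums
      (\<Sum>u\<in>words_upto K. hlog_moment_coeff w u * hlog_series u x)"
    unfolding moment by (simp add: sum_distrib_left mult_ac)
  then show ?thesis
    using hlog_series_kernel_integral[OF assms(1,3,4)] by (simp add: sums_iff)
qed

section \<open>The functions \<open>g\<^sub>l\<close>\<close>

lemma hlog_series_one:
  assumes "0 \<le> x" "x < 1"
  shows "hlog_series [1] x = - ln (1 - x)"
proof -
  have "((\<lambda>t. 1 / (1 - t)) has_integral (- ln (1 - x) - - ln (1 - 0))) {0..x}"
  proof (rule fundamental_theorem_of_calculus)
    fix t
    assume "t \<in> {0..x}"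
    then have "((\<lambda>t. - ln (1 - t)) has_real_derivative 1 / (1 - t)) (at t within {0..x})"
      using assms by (auto intro!: derivative_eq_intros)
    then show "((\<lambda>t. - ln (1 - t)) has_vector_derivative 1 / (1 - t)) (at t within {0..x})"
      by (simp add: has_real_derivative_iff_has_vector_derivative)
  qed (use assms in simp)
  then have "hyperlog (map real [1]) x = - ln (1 - x)"
    by (simp add: integral_unique)
  then show ?thesis
    using hyperlog_eq_hlog_series[of "[1]" x] assms by (simp add: word01_def)
qed

text \<open>\<open>g_coeff n\<close> are the coefficients of \<open>g (n + 2)\<close>; only their values on
  \<open>words_upto (Suc n)\<close> matter.\<close>
fun g_coeff :: "nat \<Rightarrow> nat list \<Rightarrow> real" where
  "g_coeff 0 u = 1"
| "g_coeff (Suc n) v = (\<Sum>u\<in>words_upto (Suc n). g_coeff n u * hlog_moment_coeff u v)"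

lemma g_coeff_in_mzv_zspan: "v \<in> words_upto (Suc n) \<Longrightarrow> g_coeff n v \<in> mzv_zspan (Suc n - length v)"
proof (induction n arbitrary: v)
  case 0
  then show ?case by (simp add: words_upto_1 one_in_mzv_zspan)
next
  case (Suc n)
  have "g_coeff n u * hlog_moment_coeff u v \<in> mzv_zspan (Suc (Suc n) - length v)"
    if "u \<in> words_upto (Suc n)" for u
  proof (cases "length v \<le> Suc (length u)")
    case True
    have "g_coeff n u * hlog_moment_coeff u v \<in>
        mzv_zspan ((Suc n - length u) + (Suc (length u) - length v))"
      using that True by (intro mzv_zspan_mult Suc.IH hlog_moment_coeff_in_mzv_zspan)
        (auto simp: words_upto_def)
    moreover have "(Suc n - length u) + (Suc (length u) - length v) = Suc (Suc n) - length v"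
      using that True by (auto simp: words_upto_def)
    ultimately show ?thesis by simp
  qed (simp add: hlog_moment_coeff_eq_0 mzv_zspan_zero)
  then show ?case
    by (simp add: mzv_zspan_sum)
qed

lemma g_coeff_kernel_integral:
  assumes "0 < x" "x < 1"
  shows "((\<lambda>t. x * (\<Sum>u\<in>words_upto (Suc n). g_coeff n u * hlog_series u t) / (1 - t * x))
    has_integral (\<Sum>v\<in>words_upto (Suc (Suc n)). g_coeff (Suc n) v * hlog_series v x)) {0<..<1}"
proof -
  have "((\<lambda>t. \<Sum>u\<in>words_upto (Suc n). g_coeff n u * (x * hlog_series u t / (1 - t * x))) has_integral
      (\<Sum>u\<in>words_upto (Suc n). g_coeff n u *
        (\<Sum>v\<in>words_upto (Suc (Suc n)). hlog_moment_coeff u v * hlog_series v x))) {0<..<1}"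
    using assms finite_words_upto
    by (intro has_integral_sum has_integral_mult_right hlog_series_kernel_integral_expansion)
      (auto simp: words_upto_def)
  then show ?thesis
    by (simp add: sum_distrib_left sum_distrib_right sum_divide_distrib
        sum.swap[of _ "words_upto (Suc n)"] mult_ac)
qed

lemma g_eq_hlog_series:
  assumes "0 < x" "x < 1"
  shows "g (Suc (Suc n)) x =
    (if even n then 1 / x else 1) * (\<Sum>u\<in>words_upto (Suc n). g_coeff n u * hlog_series u x)"
  using assms
proof (induction n arbitrary: x)
  case 0
  then show ?case
    by (simp add: words_upto_1 hlog_series_one[unfolded One_nat_def] numeral_2_eq_2)
next
  case (Suc n)
  let ?P = "\<lambda>t. \<Sum>u\<in>words_upto (Suc n). g_coeff n u * hlog_series u t"
  let ?I = "\<Sum>v\<in>words_upto (Suc (Suc n)). g_coeff (Suc n) v * hlog_series v x"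
  have kernel: "((\<lambda>t. x * ?P t / (1 - t * x)) has_integral ?I) {0<..<1}"
    using Suc.prems by (rule g_coeff_kernel_integral)
  show ?case
  proof (cases "even n")
    case True
    have "((\<lambda>t. t * x * g (Suc (Suc n)) t / (1 - t * x)) has_integral ?I) {0<..<1}"
      using kernel by (rule has_integral_cong[THEN iffD1, rotated]) (use Suc.IH True in auto)
    then show ?thesis
      using True by (simp add: has_integral_Icc_iff_Ioo[symmetric] integral_unique)
  next
    case False
    have "((\<lambda>t. 1 / x * (x * ?P t / (1 - t * x))) has_integral 1 / x * ?I) {0<..<1}"
      using kernel by (rule has_integral_mult_right)
    then have "((\<lambda>t. g (Suc (Suc n)) t / (1 - t * x)) has_integral 1 / x * ?I) {0<..<1}"
      by (rule has_integral_cong[THEN iffD1, rotated]) (use Suc.IH Suc.prems False in auto)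
    then show ?thesis
      using False by (simp add: has_integral_Icc_iff_Ioo[symmetric] integral_unique)
  qed
qed

theorem mainTheorem2:
  fixes l :: nat
  assumes "l \<ge> 2"
  shows "\<exists>\<alpha> :: nat list \<Rightarrow> complex.
    (\<forall>m\<in>{1..l-1}. \<forall>i\<in>Iw m. \<alpha> i \<in> mzv_span (l - 1 - m)) \<and>
    (\<forall>x::real. 0 < x \<and> x < 1 \<longrightarrow>
       complex_of_real (g l x) =
         (if even l then 1 / complex_of_real x else 1) *
         (\<Sum>m=1..l-1. \<Sum>i\<in>Iw m. \<alpha> i * complex_of_real (hyperlog (map real i) x)))"
proof -
  obtain n where l: "l = Suc (Suc n)"
    using assms by (metis add_2_eq_Suc le_Suc_ex)
  let ?\<alpha> = "\<lambda>i. complex_of_real (g_coeff n i)"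
  have "?\<alpha> i \<in> mzv_span (l - 1 - m)" if "m \<in> {1..l-1}" "i \<in> Iw m" for m i
    using that g_coeff_in_mzv_zspan[of i n] of_real_in_mzv_span
    by (auto simp: l words_upto_eq_UN_Iw Iw_def)
  moreover have "complex_of_real (g l x) = (if even l then 1 / complex_of_real x else 1) *
      (\<Sum>m=1..l-1. \<Sum>i\<in>Iw m. ?\<alpha> i * complex_of_real (hyperlog (map real i) x))"
    if "0 < x" "x < 1" for x
  proof -
    have "hyperlog (map real i) x = hlog_series i x" if "i \<in> words_upto (Suc n)" for i
      using that \<open>0 < x\<close> \<open>x < 1\<close> by (intro hyperlog_eq_hlog_series) (auto simp: words_upto_def)
    then show ?thesis
      unfolding sum_Iw_eq_sum_words_upto using g_eq_hlog_series[OF that, of n]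
      by (simp add: l)
  qed
  ultimately show ?thesis
    by (intro exI[of _ ?\<alpha>]) blast
qed

end
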